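(* Let $I\subseteq\mathbb{R}$ be an interval containing $0$ and let $f:I\to\mathbb{R}$ be such that $f|_{I\cap[0,\infty)}$ is convex and $f(-x)=-f(x)$ whenever $x$ and $-x$ both belong to $I$. Then for every family of points $a_1,\dots,a_n\in I$ such that \[ \sum_{k=1}^n a_k+(n-2)\min\{a_1,\dots,a_n\}\ge0, \] we have \[ f\left(\frac1n\sum_{k=1}^n a_k\right)\le\frac1n\sum_{k=1}^n f(a_k). \] *)

theory Defs
  imports "HOL-Analysis.Analysis"
begin

end

theory Submission
  imports Defs
begin

text \<open>If all points are nonnegative this is Jensen's inequality. Otherwise let \<open>m < 0\<close> be the
minimum and \<open>y\<close> the mean of the nonnegative points; the hypothesis forces \<open>y \<ge> -m\<close>, so every
point lies in \<open>[-y, y]\<close>. Convexity on \<open>[0, y]\<close> together with \<open>f 0 = 0\<close> puts the graph of \<open>f\<close>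
below the secant \<open>t \<mapsto> t f(y) / y\<close> on \<open>[0, y]\<close> and, by oddness, above it on \<open>[-y, 0]\<close>.
Jensen on the nonnegative points and the secant bound on the negative ones give
\<open>\<Sum> f(a\<^sub>k) \<ge> S f(y) / y\<close> with \<open>S = \<Sum> a\<^sub>k\<close>, and since \<open>0 \<le> S/n \<le> y\<close> the secant bound once more
gives \<open>f(S/n) \<le> (S/n) f(y) / y\<close>.\<close>

lemma convex_on_mean_le:
  fixes y :: "'a \<Rightarrow> 'b::real_vector"
  assumes "finite A" "A \<noteq> {}" "convex_on C f" "\<And>i. i \<in> A \<Longrightarrow> y i \<in> C"
  shows "f (sum y A /\<^sub>R card A) \<le> (\<Sum>i\<in>A. f (y i)) / card A"
proof -
  have "card A > 0" using assms by (simp add: card_gt_0_iff)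
  then have "f (\<Sum>i\<in>A. inverse (card A) *\<^sub>R y i) \<le> (\<Sum>i\<in>A. inverse (card A) * f (y i))"
    by (intro convex_on_sum[OF assms(1-3)]) (use assms(4) in auto)
  then show ?thesis
    by (simp add: scaleR_sum_right sum_distrib_left[symmetric] divide_inverse_commute)
qed

lemma convex_mean_mem:
  fixes y :: "'a \<Rightarrow> 'b::real_vector"
  assumes "finite A" "A \<noteq> {}" "convex C" "\<And>i. i \<in> A \<Longrightarrow> y i \<in> C"
  shows "sum y A /\<^sub>R card A \<in> C"
proof -
  have "card A > 0" using assms by (simp add: card_gt_0_iff)
  then have "(\<Sum>i\<in>A. inverse (card A) *\<^sub>R y i) \<in> C"
    by (intro convex_sum[OF assms(1,3)]) (use assms(4) in auto)
  then show ?thesis by (simp add: scaleR_sum_right)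
qed

lemma convex_on_le_secant_origin:
  fixes f :: "real \<Rightarrow> real"
  assumes "convex_on C f" "0 \<in> C" "f 0 = 0" "x \<in> C" "0 \<le> t" "t \<le> x"
  shows "f t \<le> t / x * f x"
proof -
  have "f ((1 - t / x) *\<^sub>R 0 + (t / x) *\<^sub>R x) \<le> (1 - t / x) * f 0 + (t / x) * f x"
    by (rule convex_onD[OF assms(1)]) (use assms in \<open>auto simp: divide_le_eq_1\<close>)
  then show ?thesis using assms by (cases "x = 0") auto
qed

lemma mean_nonneg_part_ge_neg_Min:
  fixes a :: "'a \<Rightarrow> real" and A :: "'a set"
  defines "P \<equiv> {k \<in> A. 0 \<le> a k}"
  assumes "finite A" "card A \<ge> 2"
    and "sum a A + (real (card A) - 2) * Min (a ` A) \<ge> 0"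
    and "Min (a ` A) < 0"
  shows "P \<noteq> {}" "- Min (a ` A) \<le> sum a P / card P"
proof -
  define N where "N = {k \<in> A. a k < 0}"
  define M where "M = - Min (a ` A)"
  have "A \<noteq> {}" using assms(3) by auto
  then have "Min (a ` A) \<in> a ` A" using assms(2) by (intro Min_in) auto
  then obtain k0 where "k0 \<in> A" "a k0 = Min (a ` A)" by auto
  then have k0: "k0 \<in> A" "a k0 = - M" by (simp_all add: M_def)
  have "M > 0" using assms(5) by (simp add: M_def)
  have k0N: "k0 \<in> N" using k0 \<open>M > 0\<close> by (simp add: N_def)
  have split: "P \<inter> N = {}" "P \<union> N = A" by (auto simp: P_def N_def)
  have "finite P" "finite N" using assms(2) by (auto simp: P_def N_def)
  have "card P + card N = card A"
    using card_Un_disjoint[OF \<open>finite P\<close> \<open>finite N\<close> split(1)] split(2) by simp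
  then have "card P + 1 \<le> card A"
    using k0N \<open>finite N\<close> card_gt_0_iff[of N] by (cases "N = {}") auto
  then have card_P: "real (card P) \<le> real (card A) - 1" by linarith
  have "M \<le> (\<Sum>k\<in>N. - a k)"
    using member_le_sum[of k0 N "\<lambda>k. - a k"] k0N k0 \<open>finite N\<close> by (auto simp: N_def)
  moreover have "sum a A = sum a P + sum a N"
    using sum.union_disjoint[OF \<open>finite P\<close> \<open>finite N\<close> split(1)] split(2) by simp
  ultimately have sum_P: "(real (card A) - 1) * M \<le> sum a P"
    using assms(4) by (simp add: M_def sum_negf algebra_simps)
  moreover have "(real (card A) - 1) * M > 0" using assms(3) \<open>M > 0\<close> by simp
  ultimately show "P \<noteq> {}" by auto
  then have "card P > 0" using \<open>finite P\<close> by (simp add: card_gt_0_iff)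
  have "real (card P) * M \<le> (real (card A) - 1) * M"
    using card_P \<open>M > 0\<close> by (intro mult_right_mono) auto
  with sum_P \<open>card P > 0\<close> show "- Min (a ` A) \<le> sum a P / card P"
    by (simp add: M_def field_simps)
qed

lemma sum_le_card_mult_mean_nonneg_part:
  fixes a :: "'a \<Rightarrow> real" and A :: "'a set"
  defines "P \<equiv> {k \<in> A. 0 \<le> a k}"
  assumes "finite A" "P \<noteq> {}"
  shows "sum a A \<le> card A * (sum a P / card P)"
proof -
  have "finite P" "P \<subseteq> A" using assms(2) by (auto simp: P_def)
  have "sum a (A - P) \<le> 0" by (rule sum_nonpos) (auto simp: P_def)
  then have "sum a A \<le> sum a P"
    using sum.subset_diff[OF \<open>P \<subseteq> A\<close> assms(2), of a] by linarith
  also have "\<dots> = card P * (sum a P / card P)"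
    using \<open>finite P\<close> \<open>P \<noteq> {}\<close> by (simp add: card_gt_0_iff)
  also have "\<dots> \<le> card A * (sum a P / card P)"
    using card_mono[OF assms(2) \<open>P \<subseteq> A\<close>] by (intro mult_right_mono divide_nonneg_nonneg sum_nonneg) (auto simp: P_def)
  finally show ?thesis .
qed

locale odd_convex_on_nonneg =
  fixes I :: "real set" and f :: "real \<Rightarrow> real"
  assumes interval: "is_interval I" and zero_mem: "0 \<in> I"
    and convex: "convex_on (I \<inter> {0..}) f"
    and odd: "\<And>x. x \<in> I \<Longrightarrow> - x \<in> I \<Longrightarrow> f (- x) = - f x"
begin

lemma f_zero: "f 0 = 0"
  using odd[of 0] zero_mem by simp

lemma le_secant:
  assumes "y \<in> I" "0 \<le> t" "t \<le> y"
  shows "f t \<le> t / y * f y"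
  by (rule convex_on_le_secant_origin[OF convex _ f_zero]) (use assms zero_mem in auto)

lemma secant_le:
  assumes "y \<in> I" "t \<in> I" "- y \<le> t" "t \<le> 0"
  shows "t / y * f y \<le> f t"
proof -
  have "- t \<in> I" using mem_is_interval_1_I[OF interval zero_mem \<open>y \<in> I\<close>] assms by simp
  moreover have "f (- t) \<le> - t / y * f y" using assms by (intro le_secant) auto
  ultimately show ?thesis using odd[OF \<open>t \<in> I\<close>] by simp
qed

lemma secant_le_sum_at_mean_of_nonneg:
  fixes a :: "'a \<Rightarrow> real" and A :: "'a set"
  defines "P \<equiv> {k \<in> A. 0 \<le> a k}"
  defines "y \<equiv> sum a P / card P"
  assumes "finite A" "a ` A \<subseteq> I" "P \<noteq> {}" "\<And>k. k \<in> A \<Longrightarrow> - y \<le> a k"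
  shows "y \<in> I" "sum a A / y * f y \<le> (\<Sum>k\<in>A. f (a k))"
proof -
  define N where "N = {k \<in> A. a k < 0}"
  have split: "P \<inter> N = {}" "P \<union> N = A" by (auto simp: P_def N_def)
  have "finite P" "finite N" using assms(3) by (auto simp: P_def N_def)
  have P_mem: "a k \<in> I \<inter> {0..}" if "k \<in> P" for k using that assms(4) by (auto simp: P_def)
  have "y \<in> I \<inter> {0..}"
    using convex_mean_mem[OF \<open>finite P\<close> \<open>P \<noteq> {}\<close> _ P_mem] interval
    by (simp add: y_def divide_inverse_commute convex_Int is_interval_convex convex_real_interval)
  then show "y \<in> I" by simp
  have "card P > 0" using \<open>finite P\<close> \<open>P \<noteq> {}\<close> by (simp add: card_gt_0_iff)
  have "f y \<le> (\<Sum>k\<in>P. f (a k)) / card P"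
    using convex_on_mean_le[OF \<open>finite P\<close> \<open>P \<noteq> {}\<close> convex P_mem]
    by (simp add: y_def divide_inverse_commute)
  then have "sum a P / y * f y \<le> (\<Sum>k\<in>P. f (a k))"
    using \<open>card P > 0\<close> f_zero by (cases "y = 0") (simp_all add: y_def field_simps)
  moreover have "sum a N / y * f y \<le> (\<Sum>k\<in>N. f (a k))"
    unfolding sum_divide_distrib sum_distrib_right
    by (intro sum_mono secant_le[OF \<open>y \<in> I\<close>]) (use assms(4,6) in \<open>auto simp: N_def\<close>)
  ultimately show "sum a A / y * f y \<le> (\<Sum>k\<in>A. f (a k))"
    using sum.union_disjoint[OF \<open>finite P\<close> \<open>finite N\<close> split(1), of a]
      sum.union_disjoint[OF \<open>finite P\<close> \<open>finite N\<close> split(1), of "f \<circ> a"] split(2)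
    by (simp add: add_divide_distrib distrib_right)
qed

theorem mean_le:
  fixes a :: "'a \<Rightarrow> real"
  assumes "finite A" "A \<noteq> {}" "a ` A \<subseteq> I"
    and "sum a A + (real (card A) - 2) * Min (a ` A) \<ge> 0"
  shows "f (sum a A / card A) \<le> (\<Sum>k\<in>A. f (a k)) / card A"
proof -
  have Min_le_a: "Min (a ` A) \<le> a k" if "k \<in> A" for k
    by (rule Min_le) (use assms(1) that in auto)
  show ?thesis
  proof (cases "Min (a ` A) \<ge> 0")
    case True
    then have "a k \<in> I \<inter> {0..}" if "k \<in> A" for k
      using Min_le_a[OF that] that assms(3) by auto
    then show ?thesis
      using convex_on_mean_le[OF assms(1,2) convex] by (simp add: divide_inverse_commute)
  next
    case Min_neg: False
    show ?thesis
    proof (cases "card A = 1")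
      case True
      then obtain k where "A = {k}" by (rule card_1_singletonE)
      then show ?thesis by simp
    next
      case False
      then have "card A \<ge> 2" using card_gt_0_iff[of A] assms(1,2) by linarith
      define P where "P = {k \<in> A. 0 \<le> a k}"
      define y where "y = sum a P / card P"
      have "P \<noteq> {}" and y_ge: "- Min (a ` A) \<le> y"
        using mean_nonneg_part_ge_neg_Min[OF assms(1) \<open>card A \<ge> 2\<close> assms(4)] Min_neg
        by (auto simp: P_def y_def)
      have "- y \<le> a k" if "k \<in> A" for k using y_ge Min_le_a[OF that] by linarith
      then have "y \<in> I" and sum_ge: "sum a A / y * f y \<le> (\<Sum>k\<in>A. f (a k))"
        using secant_le_sum_at_mean_of_nonneg[OF assms(1,3), folded P_def y_def] \<open>P \<noteq> {}\<close>
        by blast+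
      have mean_le_y: "sum a A / card A \<le> y"
        using sum_le_card_mult_mean_nonneg_part[where a = a, OF assms(1), folded P_def y_def] \<open>P \<noteq> {}\<close>
          \<open>card A \<ge> 2\<close> by (simp add: divide_le_eq mult.commute)
      have "(real (card A) - 2) * Min (a ` A) \<le> 0"
        using \<open>card A \<ge> 2\<close> Min_neg by (intro mult_nonneg_nonpos) auto
      then have "0 \<le> sum a A / card A" using assms(4) by simp
      then have "f (sum a A / card A) \<le> sum a A / card A / y * f y"
        using le_secant[OF \<open>y \<in> I\<close> _ mean_le_y] by blast
      also have "\<dots> = (sum a A / y * f y) / card A" by simp
      also have "\<dots> \<le> (\<Sum>k\<in>A. f (a k)) / card A"
        by (rule divide_right_mono[OF sum_ge]) simp
      finally show ?thesis .
    qed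
  qed
qed

end

theorem corollary3:
  fixes I :: "real set" and f :: "real \<Rightarrow> real" and a :: "nat \<Rightarrow> real" and n :: nat
  assumes "is_interval I" and "0 \<in> I"
    and "convex_on (I \<inter> {0..}) f"
    and "\<And>x. x \<in> I \<Longrightarrow> - x \<in> I \<Longrightarrow> f (- x) = - f x"
    and "n \<ge> 1"
    and "\<And>k. k \<in> {1..n} \<Longrightarrow> a k \<in> I"
    and "(\<Sum>k=1..n. a k) + (real n - 2) * Min (a ` {1..n}) \<ge> 0"
  shows "f ((\<Sum>k=1..n. a k) / real n) \<le> (\<Sum>k=1..n. f (a k)) / real n"
proof -
  interpret odd_convex_on_nonneg I f
    using assms(1-4) by unfold_locales
  have "a ` {1..n} \<subseteq> I" using assms(6) by blast
  then show ?thesis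
    using mean_le[of "{1..n}" a] assms(5,7) by simp
qed

end
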